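(* Let $0<p<1$, $0\le y<1$, and let $n\ge 1$ be an integer. Define $Q(n,y,p)=\sum_{k=0}^\infty (-p\,k)_n(-y)^k$. Then \[ Q(n,y,p)=(-1)^{n+1}\frac{y}{y+1}\sum_{k=1}^n s(n,k)(-p)^k\sum_{m=1}^k S(k,m)\,m!\left(-\frac{1}{y+1}\right)^m =(-1)^{n+1}\frac{y}{y+1}\sum_{k=1}^n s(n,k)(-p)^k\,\omega_k\!\left(-\frac{1}{y+1}\right). \]
   Context: $(x)_n=x(x+1)\cdots(x+n-1)$ is the rising factorial. $s(n,k)$ are the (signed) Stirling numbers of the first kind, defined by $x(x-1)\cdots(x-n+1)=\sum_{k=0}^n s(n,k)x^k$, and $S(k,m)$ are the Stirling numbers of the second kind. The geometric polynomials are $\omega_k(x)=\sum_{m=0}^k S(k,m)\,m!\,x^m$. *)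

theory Defs
  imports Complex_Main "HOL-Combinatorics.Stirling"
begin

text \<open>Signed Stirling numbers of the first kind s(n,k):
  x(x-1)...(x-n+1) = sum_k s(n,k) x^k. In terms of the library's unsigned
  Stirling numbers of the first kind, s(n,k) = (-1)^(n-k) * stirling n k.\<close>
definition signed_stirling :: "nat \<Rightarrow> nat \<Rightarrow> real" where
  "signed_stirling n k = (-1) ^ (n - k) * real (stirling n k)"

definition geom_poly :: "nat \<Rightarrow> real \<Rightarrow> real" where
  "geom_poly k x = (\<Sum>m=0..k. real (Stirling k m) * fact m * x ^ m)"

definition Q :: "nat \<Rightarrow> real \<Rightarrow> real \<Rightarrow> real" where
  "Q n y p = (\<Sum>k. pochhammer (- p * real k) n * (- y) ^ k)"

end

theory Submission
  imports Defs "HOL-Analysis.Generalised_Binomial_Theorem"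
begin

text \<open>Expanding the rising factorial with the unsigned Stirling numbers of the first kind,
  (c k)_n = sum_j stirling n j c^j k^j, reduces Q to the power sums sum_k k^j z^k with z = -y.
  Writing k^j in the rising factorials (k)_m via the Stirling numbers of the second kind,
  each sum_k (k)_m z^k = m! z / (1 - z)^(m+1) is a shifted negative binomial series, and
  collecting the signs yields the geometric polynomial omega_j(-1/(1 - z)).\<close>

lemma fact_mult_pochhammer_of_nat_plus_one:
  "fact i * pochhammer (of_nat i + 1) m = (fact (i + m) :: 'a :: {comm_semiring_1, semiring_char_0})"
  by (simp add: pochhammer_fact pochhammer_product' add.commute)

lemma negative_binomial_series:
  fixes a z :: real
  assumes "\<bar>z\<bar> < 1"
  shows "(\<lambda>i. pochhammer a i / fact i * z ^ i) sums (1 - z) powr (- a)"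
proof -
  have "(- a gchoose i) * (- z) ^ i = pochhammer a i / fact i * z ^ i" for i
    by (simp add: gbinomial_pochhammer power_mult_distrib[symmetric])
  then show ?thesis
    using gen_binomial_real[of "- z" "- a"] assms by simp
qed

lemma sums_pochhammer_of_nat_mult_power:
  fixes z :: real
  assumes "\<bar>z\<bar> < 1" and "m \<ge> 1"
  shows "(\<lambda>k. pochhammer (real k) m * z ^ k) sums (fact m * z / (1 - z) ^ (m + 1))"
proof -
  have "(1 - z) powr (- (real m + 1)) = 1 / (1 - z) ^ (m + 1)"
    using assms by (subst powr_minus_divide, subst powr_realpow[symmetric]) (auto simp: add.commute)
  with negative_binomial_series[OF assms(1), of "real m + 1"]
  have "(\<lambda>i. pochhammer (real m + 1) i / fact i * z ^ i) sums (1 / (1 - z) ^ (m + 1))"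
    by simp
  from sums_mult[OF this, of "fact m * z"]
  have "(\<lambda>i. fact m * z * (pochhammer (real m + 1) i / fact i * z ^ i))
          sums (fact m * z / (1 - z) ^ (m + 1))"
    by simp
  moreover have "fact m * z * (pochhammer (real m + 1) i / fact i * z ^ i)
      = pochhammer (real (Suc i)) m * z ^ Suc i" for i
    using fact_mult_pochhammer_of_nat_plus_one[of i m, where 'a = real]
      fact_mult_pochhammer_of_nat_plus_one[of m i, where 'a = real]
    by (simp add: field_simps add.commute)
  ultimately have "(\<lambda>i. pochhammer (real (Suc i)) m * z ^ Suc i) sums (fact m * z / (1 - z) ^ (m + 1))"
    by simp
  then have "(\<lambda>k. pochhammer (real k) m * z ^ k) sums
      (fact m * z / (1 - z) ^ (m + 1) + pochhammer (real 0) m * z ^ 0)"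
    by (rule sums_Suc_iff[THEN iffD1])
  with assms(2) show ?thesis
    by (simp add: pochhammer_0_left)
qed

lemma power_eq_sum_Stirling_pochhammer:
  fixes x :: "'a :: comm_ring_1"
  shows "x ^ j = (\<Sum>m\<le>j. (- 1) ^ (j + m) * of_nat (Stirling j m) * pochhammer x m)"
proof (induction j)
  case 0
  then show ?case by simp
next
  case (Suc j)
  let ?c = "\<lambda>m. (- 1) ^ (j + m) * of_nat (Stirling j m) :: 'a"
  have shifted: "(\<Sum>m\<le>j. ?c m * of_nat m * pochhammer x m)
      = - (\<Sum>m\<le>j. (- 1) ^ (j + m) * of_nat (Suc m * Stirling j (Suc m)) * pochhammer x (Suc m))"
  proof -
    have "(\<Sum>m\<le>j. ?c m * of_nat m * pochhammer x m) = (\<Sum>m\<le>Suc j. ?c m * of_nat m * pochhammer x m)"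
      by simp
    also have "\<dots> = (\<Sum>m\<le>j. ?c (Suc m) * of_nat (Suc m) * pochhammer x (Suc m))"
      by (subst sum.atMost_Suc_shift) simp
    finally show ?thesis
      by (simp add: sum_negf[symmetric] algebra_simps)
  qed
  have "(\<Sum>m\<le>Suc j. (- 1) ^ (Suc j + m) * of_nat (Stirling (Suc j) m) * pochhammer x m)
      = (\<Sum>m\<le>j. ?c m * pochhammer x (Suc m))
        + (\<Sum>m\<le>j. (- 1) ^ (j + m) * of_nat (Suc m * Stirling j (Suc m)) * pochhammer x (Suc m))"
    by (subst sum.atMost_Suc_shift) (simp add: sum.distrib[symmetric] algebra_simps)
  also have "\<dots> = (\<Sum>m\<le>j. ?c m * pochhammer x (Suc m)) - (\<Sum>m\<le>j. ?c m * of_nat m * pochhammer x m)"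
    unfolding shifted by simp
  also have "\<dots> = x * (\<Sum>m\<le>j. ?c m * pochhammer x m)"
    \<comment> \<open>since \<open>x * pochhammer x m = pochhammer x (Suc m) - m * pochhammer x m\<close>\<close>
    by (simp add: sum_distrib_left sum_subtractf[symmetric] pochhammer_Suc algebra_simps)
  finally show ?case
    using Suc.IH by simp
qed

lemma sums_of_nat_power_mult_power:
  fixes z :: real
  assumes "\<bar>z\<bar> < 1" and "j \<ge> 1"
  shows "(\<lambda>k. real k ^ j * z ^ k) sums ((- 1) ^ j * (z / (1 - z)) * geom_poly j (- 1 / (1 - z)))"
proof -
  let ?c = "\<lambda>m. (- 1) ^ (j + m) * real (Stirling j m)"
  have "(\<lambda>k. \<Sum>m\<le>j. ?c m * (pochhammer (real k) m * z ^ k))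
      sums (\<Sum>m\<le>j. ?c m * (fact m * z / (1 - z) ^ (m + 1)))"
  proof (intro sums_sum)
    fix m
    show "(\<lambda>k. ?c m * (pochhammer (real k) m * z ^ k)) sums (?c m * (fact m * z / (1 - z) ^ (m + 1)))"
    proof (cases "m = 0")
      case True
      with assms(2) show ?thesis
        by (cases j) simp_all
    next
      case False
      with assms(1) show ?thesis
        by (intro sums_mult sums_pochhammer_of_nat_mult_power) simp_all
    qed
  qed
  moreover have "real k ^ j * z ^ k = (\<Sum>m\<le>j. ?c m * (pochhammer (real k) m * z ^ k))" for k
    by (subst power_eq_sum_Stirling_pochhammer) (simp add: sum_distrib_right mult.assoc)
  moreover have "(\<Sum>m\<le>j. ?c m * (fact m * z / (1 - z) ^ (m + 1)))
      = (- 1) ^ j * (z / (1 - z)) * geom_poly j (- 1 / (1 - z))"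
    using assms(1) unfolding geom_poly_def
    by (simp add: atLeast0AtMost sum_distrib_left power_add power_divide power_minus' field_simps)
  ultimately show ?thesis
    by simp
qed

lemma power_mult_signed_stirling: "(- 1) ^ n * signed_stirling n k = (- 1) ^ k * real (stirling n k)"
proof (cases "k \<le> n")
  case True
  then have "(- 1 :: real) ^ n = (- 1) ^ k * (- 1) ^ (n - k)"
    by (simp flip: power_add)
  then show ?thesis
    unfolding signed_stirling_def by (simp add: minus_one_mult_self)
next
  case False
  then show ?thesis
    by (simp add: signed_stirling_def)
qed

lemma geom_poly_eq_sum_from_1:
  assumes "j \<ge> 1"
  shows "geom_poly j x = (\<Sum>m=1..j. real (Stirling j m) * fact m * x ^ m)"
  using assms unfolding geom_poly_def by (cases j) (simp_all add: sum.atLeast_Suc_atMost)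

lemma sums_pochhammer_scaled_mult_power:
  fixes c z :: real
  assumes "\<bar>z\<bar> < 1" and "n \<ge> 1"
  shows "(\<lambda>k. pochhammer (c * real k) n * z ^ k) sums
    ((- 1) ^ n * (z / (1 - z)) * (\<Sum>j=1..n. signed_stirling n j * c ^ j * geom_poly j (- 1 / (1 - z))))"
proof -
  let ?g = "\<lambda>j. geom_poly j (- 1 / (1 - z))"
  let ?w = "\<lambda>j. (- 1) ^ j * (z / (1 - z)) * ?g j"
  have "(\<lambda>k. \<Sum>j=1..n. real (stirling n j) * c ^ j * (real k ^ j * z ^ k))
      sums (\<Sum>j=1..n. real (stirling n j) * c ^ j * ?w j)"
    using assms(1) by (intro sums_sum sums_mult sums_of_nat_power_mult_power) auto
  moreover have "pochhammer (c * real k) n * z ^ k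
      = (\<Sum>j=1..n. real (stirling n j) * c ^ j * (real k ^ j * z ^ k))" for k
  proof -
    have "pochhammer (c * real k) n = (\<Sum>j=0..n. real (stirling n j) * (c * real k) ^ j)"
      by (simp add: atLeast0AtMost stirling_pochhammer)
    also have "\<dots> = (\<Sum>j=1..n. real (stirling n j) * (c * real k) ^ j)"
      using assms(2) by (simp add: sum.atLeast_Suc_atMost)
    finally show ?thesis
      by (simp add: sum_distrib_left sum_distrib_right power_mult_distrib mult_ac)
  qed
  moreover have "(\<Sum>j=1..n. real (stirling n j) * c ^ j * ?w j)
      = (- 1) ^ n * (z / (1 - z)) * (\<Sum>j=1..n. signed_stirling n j * c ^ j * ?g j)"
    unfolding sum_distrib_left
  proof (intro sum.cong refl)
    fix j
    have "(- 1) ^ n * (z / (1 - z)) * (signed_stirling n j * c ^ j * ?g j)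
        = ((- 1) ^ n * signed_stirling n j) * c ^ j * (z / (1 - z)) * ?g j"
      by (simp only: mult_ac)
    then show "real (stirling n j) * c ^ j * ?w j
        = (- 1) ^ n * (z / (1 - z)) * (signed_stirling n j * c ^ j * ?g j)"
      unfolding power_mult_signed_stirling by (simp only: mult_ac)
  qed
  ultimately show ?thesis
    by simp
qed

theorem mainTheorem3:
  fixes n :: nat and y p :: real
  assumes "0 < p" and "p < 1" and "0 \<le> y" and "y < 1" and "n \<ge> 1"
  shows "summable (\<lambda>k. pochhammer (- p * real k) n * (- y) ^ k)
    \<and> Q n y p = (-1) ^ (n + 1) * (y / (y + 1)) *
        (\<Sum>k=1..n. signed_stirling n k * (- p) ^ k *
           (\<Sum>m=1..k. real (Stirling k m) * fact m * (- 1 / (y + 1)) ^ m))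
    \<and> (-1) ^ (n + 1) * (y / (y + 1)) *
        (\<Sum>k=1..n. signed_stirling n k * (- p) ^ k *
           (\<Sum>m=1..k. real (Stirling k m) * fact m * (- 1 / (y + 1)) ^ m))
      = (-1) ^ (n + 1) * (y / (y + 1)) *
        (\<Sum>k=1..n. signed_stirling n k * (- p) ^ k * geom_poly k (- 1 / (y + 1)))"
proof -
  have "\<bar>- y\<bar> < 1"
    using assms(3,4) by simp
  from sums_pochhammer_scaled_mult_power[OF this assms(5), of "- p"]
  have sums: "(\<lambda>k. pochhammer (- p * real k) n * (- y) ^ k) sums
      ((-1) ^ (n + 1) * (y / (y + 1)) *
        (\<Sum>k=1..n. signed_stirling n k * (- p) ^ k * geom_poly k (- 1 / (y + 1))))"
    by (simp add: add.commute)
  have "(\<Sum>k=1..n. signed_stirling n k * (- p) ^ k *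
           (\<Sum>m=1..k. real (Stirling k m) * fact m * (- 1 / (y + 1)) ^ m))
      = (\<Sum>k=1..n. signed_stirling n k * (- p) ^ k * geom_poly k (- 1 / (y + 1)))"
    by (intro sum.cong refl) (simp add: geom_poly_eq_sum_from_1)
  with sums show ?thesis
    unfolding Q_def by (simp add: sums_iff)
qed

end
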